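(* Let $H=(U,(A_1,\dots,A_m))$ be a harmonic set system with $|U|<m(m-2)$ and $m\ge 51$. Then $H_{\{1,3,5\},\{7,9,11\}}=\emptyset$.
   Context: For $I_1,I_2\subseteq[m]$, $H_{I_1,I_2}=\bigcap_{i\in I_1}A_i\cap\bigcap_{i\in I_2}(U\setminus A_i)$ (empty intersection $=U$), $H_I=H_{I,\emptyset}$. The run decomposition of a finite set $I$ of positive integers is the partition of sizes, in nonincreasing order, of the maximal runs of consecutive integers in $I$. $H$ is harmonic if $|H_I|=|H_J|$ whenever $I,J\subseteq[m]$ have the same run decomposition. *)

theory Defs
  imports Main "HOL-Library.Multiset"
begin

text \<open>Set system: ground set U and sets A 1, ..., A m (indices 1..m).
  H_{I1,I2} = intersection of the A i (i in I1) and of the complements U - A i (i in I2),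
  the empty intersection being U.\<close>
definition Hsys :: "'a set \<Rightarrow> (nat \<Rightarrow> 'a set) \<Rightarrow> nat set \<Rightarrow> nat set \<Rightarrow> 'a set" where
  "Hsys U A I1 I2 = U \<inter> (\<Inter>i\<in>I1. A i) \<inter> (\<Inter>i\<in>I2. U - A i)"

definition runs :: "nat set \<Rightarrow> nat set set" where
  "runs I = {{a..b} | a b. a \<le> b \<and> {a..b} \<subseteq> I \<and> (a = 0 \<or> a - 1 \<notin> I) \<and> Suc b \<notin> I}"

definition run_decomposition :: "nat set \<Rightarrow> nat list" where
  "run_decomposition I = rev (sorted_list_of_multiset (image_mset card (mset_set (runs I))))"

definition harmonic :: "'a set \<Rightarrow> (nat \<Rightarrow> 'a set) \<Rightarrow> nat \<Rightarrow> bool" where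
  "harmonic U A m \<longleftrightarrow> (\<forall>I J. I \<subseteq> {1..m} \<longrightarrow> J \<subseteq> {1..m} \<longrightarrow>
      run_decomposition I = run_decomposition J \<longrightarrow>
      card (Hsys U A I {}) = card (Hsys U A J {}))"

end

theory Submission
  imports Defs "HOL.Binomial_Plus"
begin

(* Let W be the odd indices in [m], so M = |W| = ceil(m/2) >= 26, and let the trace of a point x
   be the set of i in W with x in A i. A set of odd indices has only singleton runs, so by
   harmonicity |H_J|, the number of points whose trace contains J, depends only on |J| for J
   contained in W. Inverting these superset counts (downward induction on |T|, carrying the sum
   over proper supersets of T to that over proper supersets of T' by a permutation of W) shows that
   the number of points with trace exactly T depends only on |T| as well. A point of
   H_{{1,3,5},{7,9,11}} has a trace of size k with 3 <= k <= M - 3, so every k-subset of W is a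
   trace, and |U| >= C(M,k) >= C(M,3) >= m(m-2). *)

lemma runs_isolated:
  assumes "\<And>i. i \<in> J \<Longrightarrow> Suc i \<notin> J"
  shows "runs J = (\<lambda>a. {a}) ` J"
proof (intro set_eqI iffI)
  fix R assume "R \<in> runs J"
  then obtain a b where R: "R = {a..b}" "a \<le> b" "{a..b} \<subseteq> J" unfolding runs_def by blast
  have "a = b"
  proof (rule ccontr)
    assume "a \<noteq> b"
    then have "a \<in> J" "Suc a \<in> J" using R by auto
    with assms show False by blast
  qed
  with R show "R \<in> (\<lambda>a. {a}) ` J" by auto
next
  fix R assume "R \<in> (\<lambda>a. {a}) ` J"
  then obtain a where a: "R = {a}" "a \<in> J" by auto
  have "a = 0 \<or> a - 1 \<notin> J"
    using assms[of "a - 1"] a(2) by (cases a) auto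
  moreover have "Suc a \<notin> J"
    using assms a(2) by blast
  ultimately show "R \<in> runs J"
    unfolding runs_def using a by (auto intro!: exI[of _ a])
qed

lemma run_decomposition_isolated:
  assumes "\<And>i. i \<in> J \<Longrightarrow> Suc i \<notin> J"
  shows "run_decomposition J = replicate (card J) 1"
proof -
  have "mset_set (runs J) = image_mset (\<lambda>a. {a}) (mset_set J)"
    by (simp add: runs_isolated[OF assms] image_mset_mset_set inj_on_def)
  then have "image_mset card (mset_set (runs J)) = replicate_mset (card J) 1"
    by (simp add: multiset.map_comp o_def image_mset_const_eq)
  then show ?thesis
    unfolding run_decomposition_def by (simp flip: mset_replicate)
qed

definition trace :: "(nat \<Rightarrow> 'a set) \<Rightarrow> nat set \<Rightarrow> 'a \<Rightarrow> nat set" where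
  "trace A W x = {i\<in>W. x \<in> A i}"

lemma harmonic_card_superset_trace_uniform:
  assumes "harmonic U A m" "W \<subseteq> {1..m}" "\<forall>i\<in>W. odd i"
    and "J \<subseteq> W" "J' \<subseteq> W" "card J = card J'"
  shows "card {x\<in>U. J \<subseteq> trace A W x} = card {x\<in>U. J' \<subseteq> trace A W x}"
proof -
  have Hsys: "Hsys U A I {} = {x\<in>U. I \<subseteq> trace A W x}" if "I \<subseteq> W" for I
    using that unfolding Hsys_def trace_def by auto
  have isolated: "Suc i \<notin> I" if "I \<subseteq> W" "i \<in> I" for I i
    using assms(3) that by (metis even_Suc subsetD)
  have "J \<subseteq> {1..m}" "J' \<subseteq> {1..m}"
    using assms(2,4,5) by auto
  moreover have "run_decomposition J = run_decomposition J'"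
    using run_decomposition_isolated[OF isolated[OF assms(4)]]
      run_decomposition_isolated[OF isolated[OF assms(5)]] assms(6) by simp
  ultimately have "card (Hsys U A J {}) = card (Hsys U A J' {})"
    by (rule assms(1)[unfolded harmonic_def, rule_format])
  then show ?thesis
    using Hsys assms(4,5) by simp
qed

lemma ex_bij_betw_self_image_eq:
  assumes "finite W" "T \<subseteq> W" "T' \<subseteq> W" "card T = card T'"
  shows "\<exists>p. bij_betw p W W \<and> p ` T = T'"
proof -
  have "finite T" "finite T'" "finite (W - T)" "finite (W - T')"
    using assms finite_subset by auto
  moreover have "card (W - T) = card (W - T')"
    using assms calculation by (simp add: card_Diff_subset)
  ultimately obtain f g where f: "bij_betw f T T'" and g: "bij_betw g (W - T) (W - T')"
    using assms(4) finite_same_card_bij by metis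
  define p where "p x = (if x \<in> T then f x else g x)" for x
  have "bij_betw p T T'"
    using f by (rule bij_betw_cong[THEN iffD1, rotated]) (simp add: p_def)
  moreover have "bij_betw p (W - T) (W - T')"
    using g by (rule bij_betw_cong[THEN iffD1, rotated]) (simp add: p_def)
  ultimately have "bij_betw p (T \<union> (W - T)) (T' \<union> (W - T'))"
    by (rule bij_betw_combine) auto
  with assms(2,3) \<open>bij_betw p T T'\<close> show ?thesis
    by (metis Un_Diff_cancel Un_absorb1 bij_betw_imp_surj_on)
qed

lemma bij_betw_image_strict_supersets:
  assumes "bij_betw p W W" "T \<subseteq> W"
  shows "bij_betw (image p) {J. T \<subset> J \<and> J \<subseteq> W} {J. p ` T \<subset> J \<and> J \<subseteq> W}"
proof -
  have Pow: "bij_betw (image p) (Pow W) (Pow W)"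
    using assms(1) by (rule bij_betw_image_Pow)
  have inj: "inj_on p W" and surj: "p ` W = W"
    using assms(1) by (simp_all add: bij_betw_def)
  have strict_iff: "p ` T \<subset> p ` J \<longleftrightarrow> T \<subset> J" if "J \<subseteq> W" for J
  proof
    assume strict: "p ` T \<subset> p ` J"
    have "T \<subseteq> J"
    proof
      fix t assume "t \<in> T"
      then have "p t \<in> p ` J" using strict by blast
      then show "t \<in> J" using inj_on_image_mem_iff[OF inj] \<open>t \<in> T\<close> assms(2) that by blast
    qed
    with strict show "T \<subset> J" by blast
  qed (use inj that in \<open>meson image_strict_mono inj_on_subset\<close>)
  have "image p ` {J. T \<subset> J \<and> J \<subseteq> W} = {J. p ` T \<subset> J \<and> J \<subseteq> W}"
  proof (intro set_eqI iffI)
    fix J' assume "J' \<in> image p ` {J. T \<subset> J \<and> J \<subseteq> W}"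
    then obtain J where "T \<subset> J" "J \<subseteq> W" "J' = p ` J" by blast
    then show "J' \<in> {J. p ` T \<subset> J \<and> J \<subseteq> W}"
      using strict_iff[of J] image_mono[of J W p] surj by simp
  next
    fix J' assume J': "J' \<in> {J. p ` T \<subset> J \<and> J \<subseteq> W}"
    then have "J' \<in> image p ` Pow W"
      using Pow by (simp add: bij_betw_def)
    then obtain J where "J \<subseteq> W" "J' = p ` J" by blast
    with J' have "T \<subset> J" using strict_iff[of J] by simp
    with \<open>J \<subseteq> W\<close> \<open>J' = p ` J\<close> show "J' \<in> image p ` {J. T \<subset> J \<and> J \<subseteq> W}" by blast
  qed
  moreover have "inj_on (image p) {J. T \<subset> J \<and> J \<subseteq> W}"
    by (rule inj_on_subset[OF bij_betw_imp_inj_on[OF Pow]]) blast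
  ultimately show ?thesis by (simp add: bij_betw_def)
qed

lemma card_superset_eq_sum_card_fibres:
  assumes "finite U" "finite W" "\<forall>x\<in>U. S x \<subseteq> W"
  shows "card {x\<in>U. T \<subseteq> S x} = (\<Sum>J | T \<subseteq> J \<and> J \<subseteq> W. card {x\<in>U. S x = J})"
proof -
  have "{x\<in>U. T \<subseteq> S x} = (\<Union>J \<in> {J. T \<subseteq> J \<and> J \<subseteq> W}. {x\<in>U. S x = J})"
    using assms(3) by auto
  also have "card \<dots> = (\<Sum>J | T \<subseteq> J \<and> J \<subseteq> W. card {x\<in>U. S x = J})"
    by (rule card_UN_disjoint) (use assms(1,2) in auto)
  finally show ?thesis .
qed

lemma card_fibre_eq_card_fibre_image:
  assumes "finite U" "finite W" "\<forall>x\<in>U. S x \<subseteq> W" "bij_betw p W W"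
    and superset: "\<And>J. J \<subseteq> W \<Longrightarrow> card {x\<in>U. J \<subseteq> S x} = card {x\<in>U. p ` J \<subseteq> S x}"
    and "T \<subseteq> W"
  shows "card {x\<in>U. S x = T} = card {x\<in>U. S x = p ` T}"
  using \<open>T \<subseteq> W\<close>
proof (induction "card W - card T" arbitrary: T rule: less_induct)
  case less
  define c where "c J = card {x\<in>U. S x = J}" for J
  have split: "card {x\<in>U. T' \<subseteq> S x} = c T' + (\<Sum>J | T' \<subset> J \<and> J \<subseteq> W. c J)"
    if "T' \<subseteq> W" for T'
  proof -
    have "{J. T' \<subseteq> J \<and> J \<subseteq> W} = insert T' {J. T' \<subset> J \<and> J \<subseteq> W}"
      using that by auto
    then show ?thesis
      using card_superset_eq_sum_card_fibres[OF assms(1-3)] assms(2) by (simp add: c_def)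
  qed
  have "c J = c (p ` J)" if "T \<subset> J" "J \<subseteq> W" for J
  proof -
    have "card T < card J"
      using that assms(2) by (meson finite_subset psubset_card_mono)
    moreover have "card J \<le> card W"
      using that assms(2) by (simp add: card_mono)
    ultimately show ?thesis
      using less.hyps[of J] that(2) by (simp add: c_def)
  qed
  then have "(\<Sum>J | T \<subset> J \<and> J \<subseteq> W. c J) = (\<Sum>J | T \<subset> J \<and> J \<subseteq> W. c (p ` J))"
    by (intro sum.cong) auto
  also have "\<dots> = (\<Sum>J | p ` T \<subset> J \<and> J \<subseteq> W. c J)"
    using bij_betw_image_strict_supersets[OF assms(4) less.prems] by (rule sum.reindex_bij_betw)
  finally show ?case
    using split[of T] split[of "p ` T"] superset[OF less.prems] less.prems
      bij_betw_imp_surj_on[OF assms(4)] by (auto simp: c_def)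
qed

lemma card_fibre_eq_if_card_superset_uniform:
  assumes "finite U" "finite W" "\<forall>x\<in>U. S x \<subseteq> W"
    and uniform: "\<And>J J'. J \<subseteq> W \<Longrightarrow> J' \<subseteq> W \<Longrightarrow> card J = card J' \<Longrightarrow>
        card {x\<in>U. J \<subseteq> S x} = card {x\<in>U. J' \<subseteq> S x}"
    and "T \<subseteq> W" "T' \<subseteq> W" "card T = card T'"
  shows "card {x\<in>U. S x = T} = card {x\<in>U. S x = T'}"
proof -
  obtain p where p: "bij_betw p W W" "p ` T = T'"
    using ex_bij_betw_self_image_eq[OF assms(2,5-7)] by blast
  have "card {x\<in>U. J \<subseteq> S x} = card {x\<in>U. p ` J \<subseteq> S x}" if "J \<subseteq> W" for J
  proof (rule uniform)
    show "p ` J \<subseteq> W" using p(1) that by (auto simp: bij_betw_def)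
    show "card J = card (p ` J)"
      using p(1) that by (metis bij_betw_imp_inj_on card_image inj_on_subset)
  qed (fact that)
  with card_fibre_eq_card_fibre_image[OF assms(1-3) p(1)] assms(5) p(2) show ?thesis
    by blast
qed

lemma binomial_le_card_if_card_superset_uniform:
  assumes "finite U" "finite W" "\<forall>x\<in>U. S x \<subseteq> W"
    and uniform: "\<And>J J'. J \<subseteq> W \<Longrightarrow> J' \<subseteq> W \<Longrightarrow> card J = card J' \<Longrightarrow>
        card {x\<in>U. J \<subseteq> S x} = card {x\<in>U. J' \<subseteq> S x}"
    and "x0 \<in> U"
  shows "card W choose card (S x0) \<le> card U"
proof -
  have "{T. T \<subseteq> W \<and> card T = card (S x0)} \<subseteq> S ` U"
  proof
    fix T assume T: "T \<in> {T. T \<subseteq> W \<and> card T = card (S x0)}"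
    have "card {x\<in>U. S x = T} = card {x\<in>U. S x = S x0}"
      using T assms by (intro card_fibre_eq_if_card_superset_uniform) auto
    moreover have "card {x\<in>U. S x = S x0} \<noteq> 0"
      using assms(1,5) by (auto simp: card_eq_0_iff)
    ultimately have "{x\<in>U. S x = T} \<noteq> {}"
      by (metis card.empty)
    then show "T \<in> S ` U" by blast
  qed
  then have "card {T. T \<subseteq> W \<and> card T = card (S x0)} \<le> card (S ` U)"
    using assms(1) by (simp add: card_mono)
  also have "\<dots> \<le> card U"
    using assms(1) by (rule card_image_le)
  finally show ?thesis
    using n_subsets[OF assms(2)] by simp
qed

lemma binomial_le_binomial_inner:
  fixes n j k :: nat
  assumes "j \<le> k" "k \<le> n - j"
  shows "n choose j \<le> n choose k"
proof (cases "2 * k \<le> n")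
  case True
  with assms(1) show ?thesis by (rule binomial_mono)
next
  case False
  then have "n choose j \<le> n choose (n - k)"
    using assms by (intro binomial_mono) auto
  also have "\<dots> = n choose k"
    using assms by (intro binomial_symmetric[symmetric]) auto
  finally show ?thesis .
qed

lemma binomial_le_binomial_sandwich:
  assumes "finite W" "P \<subseteq> T" "T \<subseteq> W - Q" "Q \<subseteq> W" "card P = card Q"
  shows "card W choose card P \<le> card W choose card T"
proof (rule binomial_le_binomial_inner)
  have "finite T"
    using assms(1,3) finite_subset by blast
  then show "card P \<le> card T"
    using assms(2) by (rule card_mono)
  have "card T \<le> card (W - Q)"
    using assms(1,3) by (simp add: card_mono)
  also have "\<dots> = card W - card P"
    using assms(1,4,5) by (simp add: card_Diff_subset finite_subset)
  finally show "card T \<le> card W - card P" .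
qed

lemma two_times_choose_two: "2 * (Suc n choose 2) = Suc n * n"
  by (induction n) (simp_all add: numeral_2_eq_2)

lemma six_times_choose_three: "6 * (Suc (Suc n) choose 3) = Suc (Suc n) * Suc n * n"
proof (induction n)
  case (Suc n)
  have "Suc (Suc (Suc n)) choose 3 = (Suc (Suc n) choose 2) + (Suc (Suc n) choose 3)"
    using binomial_Suc_Suc[of "Suc (Suc n)" 2] by (simp add: numeral_3_eq_3)
  then have "6 * (Suc (Suc (Suc n)) choose 3)
      = 3 * (2 * (Suc (Suc n) choose 2)) + 6 * (Suc (Suc n) choose 3)"
    by simp
  also have "\<dots> = 3 * (Suc (Suc n) * Suc n) + Suc (Suc n) * Suc n * n"
    using two_times_choose_two[of "Suc n"] Suc.IH by simp
  finally show ?case by (simp add: algebra_simps)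
qed (simp add: numeral_3_eq_3)

lemma mult_diff_le_choose_three:
  fixes m M :: nat
  assumes "M \<ge> 26" "m \<le> 2 * M"
  shows "m * (m - 2) \<le> M choose 3"
proof -
  define n where "n = M - 2"
  have M: "M = Suc (Suc n)" and "n \<ge> 24"
    using assms(1) by (simp_all add: n_def)
  have "6 * (m * (m - 2)) \<le> 6 * (2 * M * (2 * M - 2))"
    using assms(2) by (intro mult_le_mono) auto
  also have "\<dots> = M * Suc n * 24"
    by (simp add: M algebra_simps)
  also have "\<dots> \<le> M * Suc n * n"
    using \<open>n \<ge> 24\<close> by (rule mult_le_mono2)
  also have "\<dots> = 6 * (M choose 3)"
    by (simp add: M six_times_choose_three)
  finally show ?thesis by simp
qed

theorem proposition4p20:
  fixes U :: "'a set" and A :: "nat \<Rightarrow> 'a set" and m :: nat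
  assumes "finite U"
    and "\<forall>i\<in>{1..m}. A i \<subseteq> U"
    and "harmonic U A m"
    and "card U < m * (m - 2)"
    and "m \<ge> 51"
  shows "Hsys U A {1, 3, 5} {7, 9, 11} = {}"
proof (rule equals0I)
  fix x0 assume x0: "x0 \<in> Hsys U A {1, 3, 5} {7, 9, 11}"
  define M where "M = (m + 1) div 2"
  define W where "W = (\<lambda>i. 2 * i + 1) ` {..<M}"
  have W: "finite W" "card W = M" "W \<subseteq> {1..m}" "\<forall>i\<in>W. odd i"
    unfolding W_def M_def by (auto simp: card_image inj_on_def)
  have "{1, 3, 5, 7, 9, 11} \<subseteq> W"
    using assms(5) unfolding W_def M_def by (auto simp: image_iff)
  then have "{1, 3, 5} \<subseteq> trace A W x0" "trace A W x0 \<subseteq> W - {7, 9, 11}" "{7, 9, 11} \<subseteq> W"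
    using x0 unfolding Hsys_def trace_def by auto
  from binomial_le_binomial_sandwich[OF W(1) this]
  have "M choose 3 \<le> M choose card (trace A W x0)"
    by (simp add: W(2) numeral_3_eq_3)
  also have "\<dots> \<le> card U"
  proof -
    have "\<forall>x\<in>U. trace A W x \<subseteq> W" "x0 \<in> U"
      using x0 unfolding trace_def Hsys_def by auto
    from binomial_le_card_if_card_superset_uniform[OF assms(1) W(1) this(1)
        harmonic_card_superset_trace_uniform[OF assms(3) W(3,4)] this(2)]
    show ?thesis
      by (simp only: W(2))
  qed
  also have "\<dots> < m * (m - 2)"
    by (fact assms(4))
  also have "\<dots> \<le> M choose 3"
    using assms(5) by (intro mult_diff_le_choose_three) (simp_all add: M_def)
  finally show False by simp
qed

end
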